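(* Let $k,n$ be integers with $2\le k\le n$. Then \[ S(n,n-k,k)=\binom{n}{k}-T(n,k+1,k). \] Moreover, if $k\le n-1$, then also $T(n,k+1,k)=C(n,n-k,n-k-1)$, so that $C(n,n-k,n-k-1)=\binom nk - S(n,n-k,k)$.
   Context: A CNF formula over variables $x_1,\dots,x_n$ is a conjunction of clauses, each clause a disjunction of literals (variables or negated variables); the width of a clause is its number of literals; a $k$-CNF is a CNF all of whose clauses have width at most $k$. For an assignment $a\in\{0,1\}^n$, $\mathrm{wt}(a)=\sum_i a_i$ is its Hamming weight. For a formula $F$, $\mathrm{sat}_t(F)$ is the set of satisfying assignments of $F$ of Hamming weight exactly $t$. $F$ is called $t$-admissible if it has no satisfying assignment of Hamming weight less than $t$. $S(n,t,k)$ is the maximum of $|\mathrm{sat}_t(F)|$ over all $t$-admissible $k$-CNF formulas $F$ on $n$ variables. A $k$-set system over a universe $U$ is a collection of $k$-element subsets of $U$; its size is the number of sets. The Turán number $T(n,q,k)$ is the size of the smallest $k$-set system $\mathcal S$ over $[n]$ such that every $q$-element subset of $[n]$ contains at least one member of $\mathcal S$ (if $q>n$ this is vacuous and $T(n,q,k)=0$). The covering number $C(n,q,k)$ is the size of the smallest $q$-set system $\mathcal S$ over $[n]$ such that every $k$-element subset of $[n]$ is contained in at least one member of $\mathcal S$. *)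

theory Defs
  imports Main
begin

(* A literal is a pair (i, b): b = True means x_i, b = False means the negation of x_i.
   An assignment a in {0,1}^n is represented by the set of indices i with a_i = 1,
   a subset of {1..n}; its Hamming weight is the cardinality of that set. *)

type_synonym literal = "nat \<times> bool"
type_synonym clause = "literal set"
type_synonym cnf = "clause set"

definition is_cnf :: "nat \<Rightarrow> cnf \<Rightarrow> bool" where
  "is_cnf n F \<longleftrightarrow> finite F \<and> (\<forall>C\<in>F. finite C \<and> (\<forall>(i,b)\<in>C. i \<in> {1..n}))"

definition is_kcnf :: "nat \<Rightarrow> nat \<Rightarrow> cnf \<Rightarrow> bool" where
  "is_kcnf n k F \<longleftrightarrow> is_cnf n F \<and> (\<forall>C\<in>F. card C \<le> k)"

definition sat_lit :: "nat set \<Rightarrow> literal \<Rightarrow> bool" where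
  "sat_lit A l \<longleftrightarrow> (fst l \<in> A \<longleftrightarrow> snd l)"

definition satisfies :: "nat set \<Rightarrow> cnf \<Rightarrow> bool" where
  "satisfies A F \<longleftrightarrow> (\<forall>C\<in>F. \<exists>l\<in>C. sat_lit A l)"

definition assignments :: "nat \<Rightarrow> nat set set" where
  "assignments n = Pow {1..n}"

definition sat_t :: "nat \<Rightarrow> nat \<Rightarrow> cnf \<Rightarrow> nat set set" where
  "sat_t n t F = {A \<in> assignments n. card A = t \<and> satisfies A F}"

definition admissible :: "nat \<Rightarrow> nat \<Rightarrow> cnf \<Rightarrow> bool" where
  "admissible n t F \<longleftrightarrow> (\<forall>A\<in>assignments n. satisfies A F \<longrightarrow> card A \<ge> t)"

definition S_num :: "nat \<Rightarrow> nat \<Rightarrow> nat \<Rightarrow> nat" where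
  "S_num n t k = Max {card (sat_t n t F) | F. is_kcnf n k F \<and> admissible n t F}"

definition T_num :: "nat \<Rightarrow> nat \<Rightarrow> nat \<Rightarrow> nat" where
  "T_num n q k = (LEAST m. \<exists>\<S>. \<S> \<subseteq> {X. X \<subseteq> {1..n} \<and> card X = k}
      \<and> (\<forall>Q. Q \<subseteq> {1..n} \<and> card Q = q \<longrightarrow> (\<exists>X\<in>\<S>. X \<subseteq> Q))
      \<and> card \<S> = m)"

definition C_num :: "nat \<Rightarrow> nat \<Rightarrow> nat \<Rightarrow> nat" where
  "C_num n q k = (LEAST m. \<exists>\<S>. \<S> \<subseteq> {X. X \<subseteq> {1..n} \<and> card X = q}
      \<and> (\<forall>K. K \<subseteq> {1..n} \<and> card K = k \<longrightarrow> (\<exists>X\<in>\<S>. K \<subseteq> X))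
      \<and> card \<S> = m)"

end

theory Submission
  imports Defs
begin

text \<open>Complementation within \<open>{1..n}\<close> turns the weight-\<open>(n - k)\<close> satisfying assignments
  of \<open>F\<close> into the \<open>k\<close>-sets whose complement satisfies \<open>F\<close>; so it suffices to show that the
  remaining \<open>k\<close>-sets, those whose complement falsifies \<open>F\<close>, are at least a Turan system, and
  that every Turan system arises in this way. If \<open>F\<close> is an \<open>(n - k)\<close>-admissible \<open>k\<close>-CNF and
  \<open>Q\<close> a \<open>(k + 1)\<close>-set, the complement of \<open>Q\<close> is too light to satisfy \<open>F\<close>, so it falsifies a
  clause with at most \<open>k\<close> positive variables, all in \<open>Q\<close>; adding to the assignment a variable
  of \<open>Q\<close> that is not among them keeps that clause false. Conversely, the monotone CNF whose
  clauses are the members of a Turan system \<open>\<S>\<close> is admissible, and among the complements of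
  \<open>k\<close>-sets it is falsified exactly by those of members of \<open>\<S>\<close>. Complementation also
  identifies Turan systems with coverings.\<close>

definition ksubsets :: "nat \<Rightarrow> nat \<Rightarrow> nat set set" where
  "ksubsets n k = {X. X \<subseteq> {1..n} \<and> card X = k}"

definition is_turan :: "nat \<Rightarrow> nat \<Rightarrow> nat \<Rightarrow> nat set set \<Rightarrow> bool" where
  "is_turan n q k \<S> \<longleftrightarrow> \<S> \<subseteq> ksubsets n k \<and> (\<forall>Q\<in>ksubsets n q. \<exists>X\<in>\<S>. X \<subseteq> Q)"

definition is_covering :: "nat \<Rightarrow> nat \<Rightarrow> nat \<Rightarrow> nat set set \<Rightarrow> bool" where
  "is_covering n q k \<S> \<longleftrightarrow> \<S> \<subseteq> ksubsets n q \<and> (\<forall>K\<in>ksubsets n k. \<exists>X\<in>\<S>. K \<subseteq> X)"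

lemma T_num_eq_Least_is_turan: "T_num n q k = (LEAST m. \<exists>\<S>. is_turan n q k \<S> \<and> card \<S> = m)"
  by (simp add: T_num_def is_turan_def ksubsets_def)

lemma C_num_eq_Least_is_covering: "C_num n q k = (LEAST m. \<exists>\<S>. is_covering n q k \<S> \<and> card \<S> = m)"
  by (simp add: C_num_def is_covering_def ksubsets_def)

lemma finite_ksubsets: "finite (ksubsets n k)"
  by (rule finite_subset[of _ "Pow {1..n}"]) (auto simp: ksubsets_def)

lemma card_ksubsets: "card (ksubsets n k) = n choose k"
  using n_subsets[of "{1..n}" k] by (simp add: ksubsets_def)

lemma Diff_Diff_subset: "X \<subseteq> A \<Longrightarrow> A - (A - X) = X"
  by blast

lemma inj_on_Diff_Pow: "inj_on (\<lambda>X. A - X) (Pow A)"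
  by (rule inj_onI) (metis Diff_Diff_subset PowD)

lemma bij_betw_Diff_ksubsets:
  assumes "k \<le> n"
  shows "bij_betw (\<lambda>X. {1..n} - X) (ksubsets n k) (ksubsets n (n - k))"
proof (rule bij_betw_imageI)
  show "inj_on (\<lambda>X. {1..n} - X) (ksubsets n k)"
    by (rule inj_on_subset[OF inj_on_Diff_Pow]) (auto simp: ksubsets_def)
  have "ksubsets n (n - k) \<subseteq> (\<lambda>X. {1..n} - X) ` ksubsets n k"
  proof
    fix Y assume "Y \<in> ksubsets n (n - k)"
    then have "Y = {1..n} - ({1..n} - Y)" "{1..n} - Y \<in> ksubsets n k"
      using assms by (auto simp: ksubsets_def card_Diff_subset finite_subset)
    then show "Y \<in> (\<lambda>X. {1..n} - X) ` ksubsets n k" by blast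
  qed
  then show "(\<lambda>X. {1..n} - X) ` ksubsets n k = ksubsets n (n - k)"
    by (auto simp: ksubsets_def card_Diff_subset finite_subset)
qed

lemma is_turan_ksubsets: "k \<le> q \<Longrightarrow> is_turan n q k (ksubsets n k)"
  unfolding is_turan_def
proof (intro conjI ballI)
  fix Q assume "k \<le> q" "Q \<in> ksubsets n q"
  then obtain X where "X \<subseteq> Q" "card X = k"
    using obtain_subset_with_card_n[of k Q] by (auto simp: ksubsets_def)
  with \<open>Q \<in> ksubsets n q\<close> show "\<exists>X\<in>ksubsets n k. X \<subseteq> Q"
    by (auto simp: ksubsets_def)
qed simp

lemma T_num_le_card: "is_turan n q k \<S> \<Longrightarrow> T_num n q k \<le> card \<S>"
  unfolding T_num_eq_Least_is_turan by (rule Least_le) blast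

lemma ex_is_turan_card_T_num: "k \<le> q \<Longrightarrow> \<exists>\<S>. is_turan n q k \<S> \<and> card \<S> = T_num n q k"
  unfolding T_num_eq_Least_is_turan by (rule LeastI_ex) (use is_turan_ksubsets in blast)

lemma T_num_le_choose: "k \<le> q \<Longrightarrow> T_num n q k \<le> n choose k"
  using T_num_le_card[OF is_turan_ksubsets] card_ksubsets by metis

lemma is_covering_Diff_image_iff:
  assumes "\<S> \<subseteq> ksubsets n k" and "k \<le> n" and "q \<le> n"
  shows "is_covering n (n - k) (n - q) ((\<lambda>X. {1..n} - X) ` \<S>) \<longleftrightarrow> is_turan n q k \<S>"
proof -
  have "(\<lambda>X. {1..n} - X) ` \<S> \<subseteq> ksubsets n (n - k)"
    using assms(1) bij_betw_Diff_ksubsets[OF assms(2)] by (auto simp: bij_betw_def)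
  moreover have "(\<forall>K\<in>ksubsets n (n - q). P K) \<longleftrightarrow> (\<forall>Q\<in>ksubsets n q. P ({1..n} - Q))" for P
  proof -
    have "ksubsets n (n - q) = (\<lambda>X. {1..n} - X) ` ksubsets n q"
      using bij_betw_imp_surj_on[OF bij_betw_Diff_ksubsets[OF assms(3)]] by simp
    then show ?thesis by simp
  qed
  moreover have "{1..n} - Q \<subseteq> {1..n} - X \<longleftrightarrow> X \<subseteq> Q" if "Q \<in> ksubsets n q" "X \<in> \<S>" for Q X
    using that assms(1) unfolding ksubsets_def by blast
  ultimately show ?thesis
    using assms(1) unfolding is_covering_def is_turan_def by auto
qed

theorem T_num_eq_C_num:
  assumes "k \<le> n" and "q \<le> n"
  shows "T_num n q k = C_num n (n - k) (n - q)"
proof -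
  let ?compl = "\<lambda>X. {1..n} - X"
  have inj: "inj_on ?compl \<S>" if "\<S> \<subseteq> ksubsets n j" for \<S> j
    by (rule inj_on_subset[OF inj_on_Diff_Pow]) (use that in \<open>auto simp: ksubsets_def\<close>)
  have "(\<exists>\<S>. is_turan n q k \<S> \<and> card \<S> = m) \<longleftrightarrow> (\<exists>\<S>. is_covering n (n - k) (n - q) \<S> \<and> card \<S> = m)"
    for m
  proof
    assume "\<exists>\<S>. is_turan n q k \<S> \<and> card \<S> = m"
    then obtain \<S> where "is_turan n q k \<S>" "card \<S> = m" by blast
    moreover have "\<S> \<subseteq> ksubsets n k" using \<open>is_turan n q k \<S>\<close> by (simp add: is_turan_def)
    ultimately show "\<exists>\<S>. is_covering n (n - k) (n - q) \<S> \<and> card \<S> = m"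
      using is_covering_Diff_image_iff[OF _ assms] card_image[OF inj] by metis
  next
    assume "\<exists>\<S>. is_covering n (n - k) (n - q) \<S> \<and> card \<S> = m"
    then obtain \<C> where \<C>: "is_covering n (n - k) (n - q) \<C>" "card \<C> = m" by blast
    have sub: "\<C> \<subseteq> ksubsets n (n - k)" using \<C>(1) by (simp add: is_covering_def)
    then have "?compl ` \<C> \<subseteq> ksubsets n k"
      using bij_betw_imp_surj_on[OF bij_betw_Diff_ksubsets[of "n - k" n]] assms(1) by auto
    moreover have "?compl ` ?compl ` \<C> = \<C>"
      using sub by (auto simp: ksubsets_def image_image Diff_Diff_subset cong: image_cong)
    ultimately show "\<exists>\<S>. is_turan n q k \<S> \<and> card \<S> = m"
      using is_covering_Diff_image_iff[OF _ assms] \<C> card_image[OF inj[OF sub]] by metis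
  qed
  then show ?thesis
    unfolding T_num_eq_Least_is_turan C_num_eq_Least_is_covering by simp
qed

definition unsat_ksets :: "nat \<Rightarrow> nat \<Rightarrow> cnf \<Rightarrow> nat set set" where
  "unsat_ksets n k F = {Z \<in> ksubsets n k. \<not> satisfies ({1..n} - Z) F}"

lemma sat_t_eq_ksubsets: "sat_t n t F = {A \<in> ksubsets n t. satisfies A F}"
  by (auto simp: sat_t_def assignments_def ksubsets_def)

lemma card_sat_t_eq_choose_minus_unsat_ksets:
  assumes "k \<le> n"
  shows "card (sat_t n (n - k) F) = (n choose k) - card (unsat_ksets n k F)"
proof -
  let ?compl = "\<lambda>X. {1..n} - X"
  have bij: "bij_betw ?compl (ksubsets n k) (ksubsets n (n - k))"
    by (rule bij_betw_Diff_ksubsets[OF assms])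
  have "sat_t n (n - k) F = {A \<in> ?compl ` ksubsets n k. satisfies A F}"
    using bij_betw_imp_surj_on[OF bij] by (simp add: sat_t_eq_ksubsets)
  also have "\<dots> = ?compl ` (ksubsets n k - unsat_ksets n k F)"
    unfolding unsat_ksets_def by blast
  finally have "sat_t n (n - k) F = ?compl ` (ksubsets n k - unsat_ksets n k F)" .
  moreover have "inj_on ?compl (ksubsets n k - unsat_ksets n k F)"
    using bij_betw_imp_inj_on[OF bij] by (rule inj_on_subset) blast
  moreover have "unsat_ksets n k F \<subseteq> ksubsets n k"
    by (auto simp: unsat_ksets_def)
  ultimately show ?thesis
    using card_Diff_subset[OF finite_subset[OF _ finite_ksubsets]] by (simp add: card_image card_ksubsets)
qed

lemma all_lits_false_insert:
  assumes "\<forall>l\<in>C. \<not> sat_lit A l" and "(q, True) \<notin> C"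
  shows "\<forall>l\<in>C. \<not> sat_lit (insert q A) l"
proof
  fix l assume "l \<in> C"
  then show "\<not> sat_lit (insert q A) l"
    using assms by (cases l) (auto simp: sat_lit_def)
qed

lemma ex_not_positive_in_clause:
  assumes "finite C" and "card C \<le> k" and "card Q = k + 1"
  shows "\<exists>q\<in>Q. (q, True) \<notin> C"
proof (rule ccontr)
  assume "\<not> ?thesis"
  then have "(\<lambda>q. (q, True)) ` Q \<subseteq> C" by blast
  then have "card ((\<lambda>q. (q, True)) ` Q) \<le> card C" by (rule card_mono[OF assms(1)])
  moreover have "card ((\<lambda>q. (q, True)) ` Q) = card Q"
    by (rule card_image) (auto simp: inj_on_def)
  ultimately show False using assms(2,3) by linarith
qed

lemma is_turan_unsat_ksets:
  assumes F: "is_kcnf n k F" and adm: "admissible n (n - k) F"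
  shows "is_turan n (k + 1) k (unsat_ksets n k F)"
  unfolding is_turan_def
proof (intro conjI ballI)
  show "unsat_ksets n k F \<subseteq> ksubsets n k" by (auto simp: unsat_ksets_def)
next
  fix Q assume Q: "Q \<in> ksubsets n (k + 1)"
  define A where "A = {1..n} - Q"
  have "card Q \<le> n" using Q card_mono[of "{1..n}" Q] by (auto simp: ksubsets_def)
  then have "card A < n - k" using Q by (auto simp: A_def ksubsets_def card_Diff_subset finite_subset)
  moreover have "A \<in> assignments n" by (auto simp: assignments_def A_def)
  ultimately have "\<not> satisfies A F" using adm by (auto simp: admissible_def)
  then obtain C where C: "C \<in> F" and C_false: "\<forall>l\<in>C. \<not> sat_lit A l"
    by (auto simp: satisfies_def)
  have "finite C" "card C \<le> k" using F C by (auto simp: is_kcnf_def is_cnf_def)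
  moreover have "card Q = k + 1" using Q by (simp add: ksubsets_def)
  ultimately obtain q where q: "q \<in> Q" "(q, True) \<notin> C"
    using ex_not_positive_in_clause by blast
  have "{1..n} - (Q - {q}) = insert q A" using Q q by (auto simp: A_def ksubsets_def)
  moreover have "\<not> satisfies (insert q A) F"
    using C all_lits_false_insert[OF C_false q(2)] by (auto simp: satisfies_def)
  moreover have "Q - {q} \<in> ksubsets n k"
    using Q q by (auto simp: ksubsets_def finite_subset)
  ultimately show "\<exists>X\<in>unsat_ksets n k F. X \<subseteq> Q" by (auto simp: unsat_ksets_def)
qed

definition monotone_cnf :: "nat set set \<Rightarrow> cnf" where
  "monotone_cnf \<S> = (\<lambda>X. (\<lambda>i. (i, True)) ` X) ` \<S>"

lemma satisfies_monotone_cnf_iff: "satisfies A (monotone_cnf \<S>) \<longleftrightarrow> (\<forall>X\<in>\<S>. X \<inter> A \<noteq> {})"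
  unfolding satisfies_def sat_lit_def monotone_cnf_def by auto

lemma is_kcnf_monotone_cnf:
  assumes "\<S> \<subseteq> ksubsets n k"
  shows "is_kcnf n k (monotone_cnf \<S>)"
proof -
  have clause: "finite C \<and> (\<forall>(i, b)\<in>C. i \<in> {1..n}) \<and> card C \<le> k"
    if C: "C \<in> monotone_cnf \<S>" for C
  proof -
    obtain X where X: "X \<in> \<S>" "C = (\<lambda>i. (i, True)) ` X"
      using C unfolding monotone_cnf_def by blast
    then have "X \<subseteq> {1..n}" "card X = k" using assms by (auto simp: ksubsets_def)
    moreover have "card C = card X"
      unfolding X(2) by (rule card_image) (auto simp: inj_on_def)
    ultimately show ?thesis using X(2) finite_subset by auto
  qed
  have "finite (monotone_cnf \<S>)"
    unfolding monotone_cnf_def using finite_subset[OF assms finite_ksubsets] by simp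
  with clause show ?thesis
    unfolding is_kcnf_def is_cnf_def by blast
qed

lemma admissible_monotone_cnf:
  assumes "is_turan n (k + 1) k \<S>"
  shows "admissible n (n - k) (monotone_cnf \<S>)"
  unfolding admissible_def
proof (intro ballI impI)
  fix A assume A: "A \<in> assignments n" and sat: "satisfies A (monotone_cnf \<S>)"
  show "n - k \<le> card A"
  proof (rule ccontr)
    assume "\<not> n - k \<le> card A"
    with A have "k + 1 \<le> card ({1..n} - A)"
      by (auto simp: assignments_def card_Diff_subset finite_subset)
    then obtain Q where Q: "Q \<subseteq> {1..n} - A" "card Q = k + 1"
      by (meson obtain_subset_with_card_n)
    then have "Q \<in> ksubsets n (k + 1)" by (auto simp: ksubsets_def)
    then obtain X where "X \<in> \<S>" "X \<subseteq> Q"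
      using assms by (auto simp: is_turan_def)
    with Q(1) sat show False
      unfolding satisfies_monotone_cnf_iff by blast
  qed
qed

lemma unsat_ksets_monotone_cnf:
  assumes "\<S> \<subseteq> ksubsets n k"
  shows "unsat_ksets n k (monotone_cnf \<S>) = \<S>"
proof -
  have "X = Z" if "X \<in> \<S>" "Z \<in> ksubsets n k" "X \<inter> ({1..n} - Z) = {}" for X Z
  proof -
    have "X \<subseteq> Z" "card X = card Z" "finite Z"
      using that assms by (auto simp: ksubsets_def finite_subset)
    then show ?thesis by (rule card_subset_eq[rotated])
  qed
  moreover have "Z \<inter> ({1..n} - Z) = {}" for Z :: "nat set" by blast
  ultimately show ?thesis
    using assms unfolding unsat_ksets_def satisfies_monotone_cnf_iff by blast
qed

theorem S_num_eq_choose_minus_T_num: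
  assumes "k \<le> n"
  shows "S_num n (n - k) k = (n choose k) - T_num n (k + 1) k"
proof -
  let ?M = "{card (sat_t n (n - k) F) | F. is_kcnf n k F \<and> admissible n (n - k) F}"
  have bound: "m \<le> (n choose k) - T_num n (k + 1) k" if m: "m \<in> ?M" for m
  proof -
    obtain F where F: "is_kcnf n k F" "admissible n (n - k) F" "m = card (sat_t n (n - k) F)"
      using m by blast
    have "T_num n (k + 1) k \<le> card (unsat_ksets n k F)"
      by (rule T_num_le_card[OF is_turan_unsat_ksets[OF F(1,2)]])
    then show ?thesis
      using card_sat_t_eq_choose_minus_unsat_ksets[OF assms] F(3) by simp
  qed
  obtain \<S> where \<S>: "is_turan n (k + 1) k \<S>" "card \<S> = T_num n (k + 1) k"
    using ex_is_turan_card_T_num[of k "k + 1" n] by auto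
  then have sub: "\<S> \<subseteq> ksubsets n k" by (simp add: is_turan_def)
  have "card (sat_t n (n - k) (monotone_cnf \<S>)) = (n choose k) - T_num n (k + 1) k"
    using card_sat_t_eq_choose_minus_unsat_ksets[OF assms] unsat_ksets_monotone_cnf[OF sub] \<S>(2)
    by simp
  then have attained: "(n choose k) - T_num n (k + 1) k \<in> ?M"
    using is_kcnf_monotone_cnf[OF sub] admissible_monotone_cnf[OF \<S>(1)] by force
  have "finite ?M"
    using bound finite_nat_set_iff_bounded_le by blast
  then show ?thesis
    unfolding S_num_def using bound attained by (intro Max_eqI) auto
qed

theorem theorem1:
  fixes n k :: nat
  assumes "2 \<le> k" and "k \<le> n"
  shows "int (S_num n (n - k) k) = int (n choose k) - int (T_num n (k + 1) k)
    \<and> (k \<le> n - 1 \<longrightarrow>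
         T_num n (k + 1) k = C_num n (n - k) (n - k - 1)
       \<and> int (C_num n (n - k) (n - k - 1)) = int (n choose k) - int (S_num n (n - k) k))"
proof -
  have S: "S_num n (n - k) k = (n choose k) - T_num n (k + 1) k"
    by (rule S_num_eq_choose_minus_T_num[OF assms(2)])
  have T_le: "T_num n (k + 1) k \<le> n choose k"
    by (rule T_num_le_choose) simp
  have "T_num n (k + 1) k = C_num n (n - k) (n - k - 1)" if "k \<le> n - 1"
    using T_num_eq_C_num[of k n "k + 1"] that assms by (simp add: diff_diff_add)
  with S T_le show ?thesis by auto
qed

end
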